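(* Let $G$ be a locally compact abelian group (written additively) not reduced to its neutral element $0$, $E$ an $\mathbb{R}$-group, and $\mathcal{H}=(H_\varepsilon)_{\varepsilon\in E}$ a continuous absorptive action of $E$ on $G$ compatible with the group operation, i.e. $H_\varepsilon(x+y)=H_\varepsilon(x)+H_\varepsilon(y)$ for all $x,y\in G$, $\varepsilon\in E$. Then: (i) the center of $\mathcal{H}$ is $0$; (ii) $G$ is metrizable; (iii) $G$ is $\sigma$-compact, noncompact and nondiscrete; (iv) any Haar measure $\lambda$ on $G$ is nontrivial and $\mathcal{H}$-homogeneous.
   Context: An $\mathbb{R}$-group is an abelian group $E$ (operation written multiplicatively) whose underlying set is a subset of $\mathbb{R}$ containing all positive integers, such that: (RG1) with the natural order of $\mathbb{R}$, $E$ is a totally ordered group; (RG2) with the topology induced from $\mathbb{R}$, $E$ is a locally compact group; (RG3) there is a nonconstant continuous homomorphism $h:E\to\mathbb{R}_+^*$ such that for every $\alpha\in E$ the set $\{\varepsilon\in E:\varepsilon\ge\alpha\}$ is integrable for $h\cdot m$, $m$ a Haar measure on $E$. $e$ is the identity of $E$, $\varepsilon^{-1}$ the group inverse; inequalities refer to the order of $\mathbb{R}$. An action of $E$ on $X$ is a family $(H_\varepsilon)_{\varepsilon\in E}$ of bijections of $X$ with $H_\varepsilon\circ H_{\varepsilon'}=H_{\varepsilon\varepsilon'}$, $H_e=\mathrm{id}_X$; continuous if $(\varepsilon,x)\mapsto H_\varepsilon(x)$ is continuous on $E\times X$; absorptive if some $\omega\in X$ satisfies: for every neighbourhood $V$ of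 $\omega$ and every $x\in X$ there are a neighbourhood $U$ of $x$ and $\alpha\in E$ with $H_{\varepsilon^{-1}}(U)\subset V$ for all $\varepsilon\le\alpha$; this $\omega$ is unique and called the center. A positive Radon measure $\lambda$ is $\mathcal{H}$-homogeneous if for each $\varepsilon$ there is $c(\varepsilon)>0$ with $\int\varphi(H_\varepsilon(x))d\lambda(x)=c(\varepsilon)\int\varphi\,d\lambda$ for all compactly supported continuous $\varphi$; it is nontrivial if $\lambda\ne0$ and $\lambda\ne\delta_\omega$ ($\omega$ the center). *)

theory Defs
  imports "HOL-Analysis.Analysis" "HOL-Probability.Probability"
begin

definition radon_on :: "'a::topological_space set \<Rightarrow> 'a measure \<Rightarrow> bool" where
  "radon_on S M \<longleftrightarrow>
     space M = S \<and> sets M = sets (restrict_space borel S) \<and>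
     (\<forall>K. compact K \<and> K \<subseteq> S \<longrightarrow> emeasure M K < \<infinity>) \<and>
     (\<forall>A\<in>sets M. emeasure M A =
        (INF U\<in>{U. openin (top_of_set S) U \<and> A \<subseteq> U}. emeasure M U)) \<and>
     (\<forall>U. openin (top_of_set S) U \<longrightarrow>
        emeasure M U = (SUP K\<in>{K. compact K \<and> K \<subseteq> U}. emeasure M K))"

definition haar_on :: "'a::topological_space set \<Rightarrow> ('a \<Rightarrow> 'a \<Rightarrow> 'a) \<Rightarrow> 'a measure \<Rightarrow> bool" where
  "haar_on S f M \<longleftrightarrow>
     radon_on S M \<and> (\<exists>A\<in>sets M. emeasure M A \<noteq> 0) \<and>
     (\<forall>g\<in>S. \<forall>A\<in>sets M. emeasure M (f g ` A) = emeasure M A)"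

definition R_group :: "real set \<Rightarrow> (real \<Rightarrow> real \<Rightarrow> real) \<Rightarrow> real \<Rightarrow> (real \<Rightarrow> real) \<Rightarrow> bool" where
  "R_group E emul eone einv \<longleftrightarrow>
     (\<forall>n::nat. n \<ge> 1 \<longrightarrow> real n \<in> E) \<and>
     (\<forall>x\<in>E. \<forall>y\<in>E. emul x y \<in> E) \<and>
     (\<forall>x\<in>E. \<forall>y\<in>E. \<forall>z\<in>E. emul (emul x y) z = emul x (emul y z)) \<and>
     (\<forall>x\<in>E. \<forall>y\<in>E. emul x y = emul y x) \<and>
     eone \<in> E \<and> (\<forall>x\<in>E. emul eone x = x) \<and>
     (\<forall>x\<in>E. einv x \<in> E \<and> emul (einv x) x = eone) \<and>
     \<comment> \<open>(RG1) totally ordered group for the order of \<real>\<close>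
     (\<forall>x\<in>E. \<forall>y\<in>E. \<forall>z\<in>E. x \<le> y \<longrightarrow> emul z x \<le> emul z y) \<and>
     \<comment> \<open>(RG2) locally compact (topological) group for the induced topology\<close>
     continuous_on (E \<times> E) (\<lambda>(x, y). emul x y) \<and> continuous_on E einv \<and>
     locally_compact_space (top_of_set E) \<and>
     \<comment> \<open>(RG3)\<close>
     (\<exists>h::real \<Rightarrow> real. continuous_on E h \<and> (\<forall>x\<in>E. h x > 0) \<and>
        (\<forall>x\<in>E. \<forall>y\<in>E. h (emul x y) = h x * h y) \<and>
        (\<exists>x\<in>E. \<exists>y\<in>E. h x \<noteq> h y) \<and>
        (\<exists>m. haar_on E emul m \<and>
           (\<forall>\<alpha>\<in>E. set_integrable m {\<epsilon>\<in>E. \<epsilon> \<ge> \<alpha>} h)))"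

definition group_action :: "real set \<Rightarrow> (real \<Rightarrow> real \<Rightarrow> real) \<Rightarrow> real \<Rightarrow>
    (real \<Rightarrow> 'g \<Rightarrow> 'g) \<Rightarrow> bool" where
  "group_action E emul eone H \<longleftrightarrow>
     (\<forall>\<epsilon>\<in>E. bij (H \<epsilon>)) \<and>
     (\<forall>\<epsilon>\<in>E. \<forall>\<epsilon>'\<in>E. H \<epsilon> \<circ> H \<epsilon>' = H (emul \<epsilon> \<epsilon>')) \<and>
     H eone = id"

definition continuous_action :: "real set \<Rightarrow> (real \<Rightarrow> 'g::topological_space \<Rightarrow> 'g) \<Rightarrow> bool" where
  "continuous_action E H \<longleftrightarrow> continuous_on (E \<times> UNIV) (\<lambda>(\<epsilon>, x). H \<epsilon> x)"

text \<open>omega is an absorbing point (a center) of the action; neighbourhoods may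
  equivalently be taken open.\<close>
definition absorbing_point :: "real set \<Rightarrow> (real \<Rightarrow> real) \<Rightarrow>
    (real \<Rightarrow> 'g::topological_space \<Rightarrow> 'g) \<Rightarrow> 'g \<Rightarrow> bool" where
  "absorbing_point E einv H \<omega> \<longleftrightarrow>
     (\<forall>V. open V \<and> \<omega> \<in> V \<longrightarrow>
        (\<forall>x. \<exists>U \<alpha>. open U \<and> x \<in> U \<and> \<alpha> \<in> E \<and>
              (\<forall>\<epsilon>\<in>E. \<epsilon> \<le> \<alpha> \<longrightarrow> H (einv \<epsilon>) ` U \<subseteq> V)))"

definition absorptive :: "real set \<Rightarrow> (real \<Rightarrow> real) \<Rightarrow> (real \<Rightarrow> 'g::topological_space \<Rightarrow> 'g) \<Rightarrow> bool" where
  "absorptive E einv H \<longleftrightarrow> (\<exists>\<omega>. absorbing_point E einv H \<omega>)"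

definition action_center :: "real set \<Rightarrow> (real \<Rightarrow> real) \<Rightarrow> (real \<Rightarrow> 'g::topological_space \<Rightarrow> 'g) \<Rightarrow> 'g" where
  "action_center E einv H = (THE \<omega>. absorbing_point E einv H \<omega>)"

definition homogeneous_measure :: "real set \<Rightarrow> (real \<Rightarrow> 'g::topological_space \<Rightarrow> 'g) \<Rightarrow> 'g measure \<Rightarrow> bool" where
  "homogeneous_measure E H lam \<longleftrightarrow>
     (\<forall>\<epsilon>\<in>E. \<exists>c::real. c > 0 \<and>
        (\<forall>\<phi>::'g \<Rightarrow> real. continuous_on UNIV \<phi> \<and> compact (closure {x. \<phi> x \<noteq> 0}) \<longrightarrow>
           (\<integral>x. \<phi> (H \<epsilon> x) \<partial>lam) = c * (\<integral>x. \<phi> x \<partial>lam)))"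

definition nontrivial_measure :: "real set \<Rightarrow> (real \<Rightarrow> real) \<Rightarrow> (real \<Rightarrow> 'g::topological_space \<Rightarrow> 'g) \<Rightarrow>
    'g measure \<Rightarrow> bool" where
  "nontrivial_measure E einv H lam \<longleftrightarrow>
     (\<exists>A\<in>sets lam. emeasure lam A \<noteq> 0) \<and>
     (\<exists>A\<in>sets lam. emeasure lam A \<noteq> indicator A (action_center E einv H))"

definition sigma_compact :: "'a::topological_space set \<Rightarrow> bool" where
  "sigma_compact S \<longleftrightarrow> (\<exists>K::nat \<Rightarrow> 'a set. (\<forall>n. compact (K n)) \<and> (\<Union>n. K n) = S)"

end

theory Submission
  imports Defs
begin

text \<open>
  Because every \<open>H \<epsilon>\<close> is additive it fixes \<open>0\<close>, so the absorbing centre can only be \<open>0\<close>.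
  A finite subcover makes absorption uniform on compact sets: the dilations \<open>H n\<close>, \<open>n \<in> \<nat>\<close>,
  eventually push any compact set into any neighbourhood of \<open>0\<close>. Applied to a compact
  neighbourhood \<open>K0\<close> of \<open>0\<close> this gives \<open>G = \<Union>m. H (1/m) K0\<close>, hence \<open>\<sigma>\<close>-compactness; applied
  to \<open>G\<close> itself or to a single point it rules out compactness and discreteness.

  If \<open>\<psi>\<close> is an Urysohn function with \<open>\<psi> 0 = 0\<close> and \<open>\<psi> = 1\<close> off \<open>K0\<close>, the functions
  \<open>y \<mapsto> \<psi> (H (1/n) (y - d))\<close>, with \<open>d\<close> running through finite nets of the compact pieces
  \<open>H (1/m) K0\<close>, are countably many and their sublevel sets \<open>{\<cdot> < 1}\<close> form a base: this
  embeds \<open>G\<close> into a countable cube, so \<open>G\<close> is metrizable and second countable.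

  A Haar measure \<open>\<lambda>\<close> is nonzero and translation invariant, hence not a Dirac measure.
  Its image under \<open>H \<epsilon>\<close> is again translation invariant, and the Fubini argument for the
  uniqueness of Haar measure (which needs the second countability just obtained, to identify
  the Borel sets of \<open>G \<times> G\<close>) makes it a positive multiple of \<open>\<lambda>\<close> on compactly supported
  continuous functions.
\<close>

text \<open>The argument of \<open>completely_regular_space_cube_embedding_explicit\<close>, for a family
  whose sublevel sets form a base.\<close>
lemma embedding_map_cube_of_sublevel_base:
  fixes K :: "('a::t1_space \<Rightarrow> real) set"
  assumes continuous: "\<And>g. g \<in> K \<Longrightarrow> continuous_map euclidean (top_of_set {0..1}) g"
    and base: "\<And>U x. open U \<Longrightarrow> x \<in> U \<Longrightarrow> \<exists>g\<in>K. g x < 1 \<and> {y. g y < 1} \<subseteq> U"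
  shows "embedding_map euclidean (product_topology (\<lambda>f. top_of_set {0..1}) K) (\<lambda>x. \<lambda>f\<in>K. f x)"
proof -
  define e where "e \<equiv> \<lambda>x. \<lambda>f\<in>K. f x"
  have "e x \<noteq> e y" if "x \<noteq> y" for x y
  proof -
    obtain g where "g \<in> K" "g x < 1" "{z. g z < 1} \<subseteq> - {y}"
      using base[of "- {y}" x] \<open>x \<noteq> y\<close> by auto
    then have "e x g \<noteq> e y g"
      unfolding e_def by auto
    then show ?thesis
      by metis
  qed
  then have "inj_on e (topspace euclidean)"
    by (meson inj_onI)
  then obtain e' where e': "\<And>x. x \<in> topspace euclidean \<Longrightarrow> e' (e x) = x"
    by (metis inv_into_f_f)
  have "continuous_map (subtopology (product_topology (\<lambda>f. top_of_set {0..1}) K)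
      (e ` topspace euclidean)) euclidean e'"
  proof (clarsimp simp add: continuous_map_atin limitin_atin openin_subtopology_alt e')
    fix x U
    assume "e x \<in> K \<rightarrow>\<^sub>E {0..1}" and "open U" and "x \<in> U"
    then obtain g where g: "g \<in> K" "g x < 1" "{y. g y < 1} \<subseteq> U"
      using base[of U x] by auto
    have "openin (top_of_set {0..1}) {0..<1::real}"
      using open_real_greaterThanLessThan[of "-1" 1] by (force simp: openin_open)
    moreover have "e x \<in> (\<Pi>\<^sub>E f\<in>K. if f = g then {0..<1} else {0..1})"
      using \<open>e x \<in> K \<rightarrow>\<^sub>E {0..1}\<close> g by (auto simp add: e_def PiE_iff)
    moreover have "y \<in> U" if "e y \<in> (\<Pi>\<^sub>E f\<in>K. if f = g then {0..<1} else {0..1})" for y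
    proof -
      have "e y g \<in> {0..<1}"
        using PiE_mem[OF that g(1)] by simp
      then show ?thesis
        using g by (auto simp: e_def)
    qed
    ultimately show "\<exists>W. openin (product_topology (\<lambda>f. top_of_set {0..1}) K) W \<and> e x \<in> W \<and>
        e' ` (range e \<inter> W - {e x}) \<subseteq> U"
      by (intro exI[of _ "PiE K (\<lambda>f. if f = g then {0..<1} else {0..1})"])
        (auto simp: openin_PiE_gen e')
  qed
  moreover have "continuous_map euclidean (product_topology (\<lambda>f. top_of_set {0..1}) K) e"
    unfolding e_def using continuous by (auto simp: continuous_map_componentwise)
  ultimately show ?thesis
    using e' unfolding e_def embedding_map_def homeomorphic_map_maps homeomorphic_maps_def
    by (fastforce simp: continuous_map_in_subtopology)
qed

lemma metrizable_space_of_countable_sublevel_base: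
  fixes K :: "('a::t1_space \<Rightarrow> real) set"
  assumes "countable K"
    and "\<And>g. g \<in> K \<Longrightarrow> continuous_map euclidean (top_of_set {0..1}) g"
    and "\<And>U x. open U \<Longrightarrow> x \<in> U \<Longrightarrow> \<exists>g\<in>K. g x < 1 \<and> {y. g y < 1} \<subseteq> U"
  shows "metrizable_space (euclidean :: 'a topology)"
proof -
  have "metrizable_space (product_topology (\<lambda>f. top_of_set {0..1::real}) K)"
    unfolding metrizable_space_product_topology
    using assms(1) by (auto intro: countable_subset metrizable_space_subtopology metrizable_space_euclidean)
  then have "metrizable_space (subtopology (product_topology (\<lambda>f. top_of_set {0..1::real}) K)
      ((\<lambda>x. \<lambda>f\<in>K. f x) ` topspace euclidean))"
    by (rule metrizable_space_subtopology)
  then show ?thesis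
    using embedding_map_imp_homeomorphic_space[OF embedding_map_cube_of_sublevel_base[OF assms(2,3)]]
      homeomorphic_metrizable_space by blast
qed

lemma locally_compact_bump:
  fixes x :: "'a::t2_space"
  assumes "locally_compact_space (euclidean :: 'a topology)"
  obtains K and \<psi> :: "'a \<Rightarrow> real" where "compact K" "continuous_map euclidean (top_of_set {0..1}) \<psi>"
    and "\<psi> x = 0" and "\<And>y. y \<notin> K \<Longrightarrow> \<psi> y = 1"
proof -
  have "\<exists>W K. open W \<and> compact K \<and> x \<in> W \<and> W \<subseteq> K"
    using assms unfolding locally_compact_space_def by simp
  then obtain W K where WK: "open W" "compact K" "x \<in> W" "W \<subseteq> K"
    by blast
  have "Hausdorff_space (euclidean :: 'a topology)"
    unfolding Hausdorff_space_def disjnt_def using hausdorff by auto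
  then have "completely_regular_space (euclidean :: 'a topology)"
    using locally_compact_regular_imp_completely_regular_space[OF assms] by blast
  moreover have "closedin euclidean (- W) \<and> x \<in> topspace euclidean - (- W)"
    using WK(1,3) by (simp add: closed_closedin[symmetric] closed_Compl)
  ultimately have "\<exists>\<psi> :: 'a \<Rightarrow> real. continuous_map euclidean (top_of_set {0..1}) \<psi> \<and>
      \<psi> x = 0 \<and> \<psi> ` (- W) \<subseteq> {1}"
    unfolding completely_regular_space_def by (elim allE[of _ "- W"] allE[of _ x] impE)
  then obtain \<psi> :: "'a \<Rightarrow> real"
    where \<psi>: "continuous_map euclidean (top_of_set {0..1}) \<psi>" "\<psi> x = 0" "\<psi> ` (- W) \<subseteq> {1}"
    by blast
  show thesis
  proof (rule that[OF WK(2) \<psi>(1,2)])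
    show "\<psi> y = 1" if "y \<notin> K" for y
      using \<psi>(3) WK(4) that by blast
  qed
qed

lemma vimage_add_right: "(\<lambda>x. x + a) -` A = (+) (- a) ` (A :: 'a::ab_group_add set)"
proof (intro set_eqI iffI)
  fix y
  assume "y \<in> (\<lambda>x. x + a) -` A"
  then have "y + a \<in> A"
    by simp
  then show "y \<in> (+) (- a) ` A"
    by (rule rev_image_eqI) (simp add: algebra_simps)
next
  fix y
  assume "y \<in> (+) (- a) ` A"
  then obtain z where "z \<in> A" "y = - a + z"
    by blast
  then show "y \<in> (\<lambda>x. x + a) -` A"
    by (simp add: algebra_simps)
qed

lemma compact_imp_sets_borel: "compact (K :: 'a::t2_space set) \<Longrightarrow> K \<in> sets borel"
  by (intro borel_closed compact_imp_closed)

lemma open_translation_topological_group: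
  fixes S :: "'a::topological_ab_group_add set"
  assumes "open S"
  shows "open ((+) a ` S)"
proof -
  have "open ((\<lambda>x. x + - a) -` S)"
    using assms by (intro open_vimage continuous_intros)
  then show ?thesis
    by (simp only: vimage_add_right minus_minus)
qed

lemma sets_borel_translation:
  fixes A :: "'a::topological_ab_group_add set"
  assumes "A \<in> sets borel"
  shows "(+) a ` A \<in> sets borel"
proof -
  have "(\<lambda>x. x + - a) -` A \<in> sets borel"
    using measurable_sets[OF _ assms, of "\<lambda>x. x + - a" borel]
    by (simp add: borel_measurable_continuous_onI continuous_intros)
  then show ?thesis
    by (simp only: vimage_add_right minus_minus)
qed

section \<open>Invariant Borel measures on abelian topological groups\<close>

definition invariant_borel_measure :: "'a::{topological_ab_group_add, t2_space} measure \<Rightarrow> bool" where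
  "invariant_borel_measure M \<longleftrightarrow> sets M = sets borel \<and>
     (\<forall>K. compact K \<longrightarrow> emeasure M K < \<infinity>) \<and>
     (\<forall>a. \<forall>A\<in>sets M. emeasure M ((+) a ` A) = emeasure M A)"

definition continuous_compact_support :: "('a::topological_space \<Rightarrow> real) \<Rightarrow> bool" where
  "continuous_compact_support f \<longleftrightarrow> continuous_on UNIV f \<and> compact (closure {x. f x \<noteq> 0})"

context
  fixes M :: "'a::{topological_ab_group_add, t2_space} measure"
  assumes M: "invariant_borel_measure M"
begin

lemma invariant_sets: "sets M = sets borel"
  using M by (simp add: invariant_borel_measure_def)

lemma invariant_space: "space M = UNIV"
  using sets_eq_imp_space_eq[OF invariant_sets] by simp

lemma invariant_emeasure_compact: "compact K \<Longrightarrow> emeasure M K < \<infinity>"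
  using M by (simp add: invariant_borel_measure_def)

lemma invariant_emeasure_translate: "A \<in> sets M \<Longrightarrow> emeasure M ((+) a ` A) = emeasure M A"
  using M by (simp add: invariant_borel_measure_def)

lemma invariant_measurable_continuous: "continuous_on UNIV f \<Longrightarrow> f \<in> borel_measurable M"
  unfolding measurable_cong_sets[OF invariant_sets refl] by (rule borel_measurable_continuous_onI)

lemma invariant_distr_translate: "distr M borel (\<lambda>x. x + a) = M"
proof (rule measure_eqI)
  fix A
  assume "A \<in> sets (distr M borel (\<lambda>x. x + a))"
  then have A: "A \<in> sets M"
    by (simp add: invariant_sets)
  have "emeasure (distr M borel (\<lambda>x. x + a)) A = emeasure M ((+) (- a) ` A)"
    using A by (subst emeasure_distr)
      (simp_all add: invariant_sets invariant_space vimage_add_right invariant_measurable_continuous continuous_intros)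
  also have "\<dots> = emeasure M A"
    using invariant_emeasure_translate[OF A] .
  finally show "emeasure (distr M borel (\<lambda>x. x + a)) A = emeasure M A" .
qed (simp add: invariant_sets)

lemma integral_invariant_translate:
  fixes f :: "'a \<Rightarrow> real"
  assumes "f \<in> borel_measurable borel"
  shows "(\<integral>x. f (x + a) \<partial>M) = integral\<^sup>L M f"
  using integral_distr[OF invariant_measurable_continuous assms, of "\<lambda>x. x + a"]
  by (simp add: invariant_distr_translate continuous_intros)

end

lemma integrable_vanishing_outside_compact:
  fixes F :: "'b::topological_space \<Rightarrow> real"
  assumes "F \<in> borel_measurable M" "continuous_on S F" "compact S" "S \<in> sets M"
    and "emeasure M S < \<infinity>" and vanish: "\<And>z. z \<notin> S \<Longrightarrow> F z = 0"
  shows "integrable M F"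
proof -
  obtain B where B: "\<And>z. z \<in> S \<Longrightarrow> \<bar>F z\<bar> \<le> B"
    using compact_imp_bounded[OF compact_continuous_image[OF assms(2,3)]]
    unfolding bounded_real by auto
  have bound: "norm (F z) \<le> norm (max B 0 * indicator S z :: real)" for z
    using B[of z] vanish[of z] by (cases "z \<in> S") auto
  have "integrable M (\<lambda>z. max B 0 * indicator S z :: real)"
    using assms(4,5) by simp
  from Bochner_Integration.integrable_bound[OF this assms(1) AE_I2[OF bound]]
  show ?thesis .
qed

lemma closure_support_vanish: "z \<notin> closure {x. f x \<noteq> 0} \<Longrightarrow> f z = 0"
  using closure_subset[of "{x. f x \<noteq> 0}"] by (metis (mono_tags) mem_Collect_eq subsetD)

lemma integrable_continuous_compact_support:
  assumes M: "invariant_borel_measure M" and f: "continuous_compact_support f"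
  shows "integrable M f"
proof (rule integrable_vanishing_outside_compact)
  show "continuous_on (closure {x. f x \<noteq> 0}) f" "compact (closure {x. f x \<noteq> 0})"
    using f continuous_on_subset unfolding continuous_compact_support_def by blast+
  then show "closure {x. f x \<noteq> 0} \<in> sets M" "emeasure M (closure {x. f x \<noteq> 0}) < \<infinity>"
    by (simp_all add: invariant_sets[OF M] compact_imp_sets_borel invariant_emeasure_compact[OF M, simplified])
  show "f \<in> borel_measurable M"
    using f unfolding continuous_compact_support_def by (simp add: invariant_measurable_continuous[OF M])
qed (rule closure_support_vanish)

lemma sigma_finite_invariant:
  fixes M :: "'a::{topological_ab_group_add, t2_space} measure"
  assumes "sigma_compact (UNIV :: 'a set)" "invariant_borel_measure M"
  shows "sigma_finite_measure M"
proof -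
  obtain K :: "nat \<Rightarrow> 'a set" where K: "\<And>n. compact (K n)" "(\<Union>n. K n) = UNIV"
    using assms(1) unfolding sigma_compact_def by blast
  show ?thesis
    unfolding sigma_finite_measure_def
  proof (intro exI conjI)
    show "countable (range K)" "\<Union> (range K) = space M"
      using K(2) invariant_space[OF assms(2)] by simp_all
    show "range K \<subseteq> sets M" "\<forall>a\<in>range K. emeasure M a \<noteq> \<infinity>"
      using K(1) invariant_emeasure_compact[OF assms(2)]
      by (auto simp: invariant_sets[OF assms(2)] compact_imp_sets_borel less_top)
  qed
qed

text \<open>Without a type class instance for second countability, the identification of the
  product of Borel algebras with the Borel algebra of the product has to be redone by hand.\<close>
lemma open_in_sets_pair_borel:
  assumes "second_countable (euclidean :: 'a::topological_space topology)"
    and "open (W :: ('a \<times> 'a) set)"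
  shows "W \<in> sets (borel \<Otimes>\<^sub>M borel)"
proof -
  obtain \<B> :: "'a set set" where \<B>: "countable \<B>" "\<And>B. B \<in> \<B> \<Longrightarrow> open B"
    and base: "\<And>U x. open U \<Longrightarrow> x \<in> U \<Longrightarrow> \<exists>B\<in>\<B>. x \<in> B \<and> B \<subseteq> U"
    using assms(1) unfolding second_countable_def by auto
  define C where "C = (\<lambda>(A, B). A \<times> B) ` {(A, B). A \<in> \<B> \<and> B \<in> \<B> \<and> A \<times> B \<subseteq> W}"
  have "countable C"
    unfolding C_def by (rule countable_image, rule countable_subset[of _ "\<B> \<times> \<B>"]) (auto simp: \<B>(1))
  moreover have "C \<subseteq> sets (borel \<Otimes>\<^sub>M borel)"
    unfolding C_def using \<B>(2) by auto
  ultimately have "\<Union>C \<in> sets (borel \<Otimes>\<^sub>M borel)"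
    by (rule sets.countable_Union)
  moreover have "W \<subseteq> \<Union>C"
  proof
    fix z assume "z \<in> W"
    then obtain A B where AB: "open A" "open B" "z \<in> A \<times> B" "A \<times> B \<subseteq> W"
      using open_prod_elim[OF assms(2)] by metis
    have "fst z \<in> A" "snd z \<in> B"
      using AB(3) by (auto simp: mem_Times_iff)
    then obtain A' B' where A': "A' \<in> \<B>" "fst z \<in> A'" "A' \<subseteq> A"
      and B': "B' \<in> \<B>" "snd z \<in> B'" "B' \<subseteq> B"
      using base[OF AB(1)] base[OF AB(2)] by meson
    have "A' \<times> B' \<in> C"
      unfolding C_def using A' B' AB(4) by blast
    moreover have "z \<in> A' \<times> B'"
      using A' B' by (cases z) auto
    ultimately show "z \<in> \<Union>C"
      by blast
  qed
  moreover have "\<Union>C \<subseteq> W"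
    unfolding C_def by auto
  ultimately show ?thesis
    by (metis subset_antisym)
qed

lemma borel_measurable_pair_continuous:
  fixes F :: "'a::topological_space \<times> 'a \<Rightarrow> real"
  assumes "second_countable (euclidean :: 'a topology)" "continuous_on UNIV F"
    and "sets M = sets borel" "sets N = sets borel"
  shows "F \<in> borel_measurable (M \<Otimes>\<^sub>M N)"
proof (rule borel_measurableI)
  fix S :: "real set"
  assume "open S"
  then have "F -` S \<in> sets (borel \<Otimes>\<^sub>M borel)"
    using assms(1,2) by (intro open_in_sets_pair_borel) (simp_all add: continuous_on_open_vimage)
  moreover have "space (M \<Otimes>\<^sub>M N) = UNIV"
    using assms(3,4) by (simp add: space_pair_measure sets_eq_imp_space_eq[of _ borel])
  ultimately show "F -` S \<inter> space (M \<Otimes>\<^sub>M N) \<in> sets (M \<Otimes>\<^sub>M N)"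
    using sets_pair_measure_cong[OF assms(3,4)] by simp
qed

lemma integrable_pair_vanishing_outside_compact:
  fixes F :: "'a::{topological_ab_group_add, t2_space} \<times> 'a \<Rightarrow> real"
  assumes countable: "second_countable (euclidean :: 'a topology)"
    and sigma: "sigma_compact (UNIV :: 'a set)"
    and M: "invariant_borel_measure M" and N: "invariant_borel_measure N"
    and F: "continuous_on UNIV F" and A: "compact A" and B: "compact B"
    and vanish: "\<And>z. z \<notin> A \<times> B \<Longrightarrow> F z = 0"
  shows "integrable (M \<Otimes>\<^sub>M N) F"
proof (rule integrable_vanishing_outside_compact[OF _ _ compact_Times[OF A B] _ _ vanish])
  show "F \<in> borel_measurable (M \<Otimes>\<^sub>M N)"
    using borel_measurable_pair_continuous[OF countable F invariant_sets[OF M] invariant_sets[OF N]] .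
  show "continuous_on (A \<times> B) F"
    using F by (rule continuous_on_subset) simp
  have AM: "A \<in> sets M" and BN: "B \<in> sets N"
    using A B by (simp_all add: invariant_sets[OF M] invariant_sets[OF N] compact_imp_sets_borel)
  then show "A \<times> B \<in> sets (M \<Otimes>\<^sub>M N)"
    by simp
  have "emeasure (M \<Otimes>\<^sub>M N) (A \<times> B) = emeasure M A * emeasure N B"
    using sigma_finite_measure.emeasure_pair_measure_Times[OF sigma_finite_invariant[OF sigma N] AM BN] .
  also have "\<dots> < \<infinity>"
    using invariant_emeasure_compact[OF M A] invariant_emeasure_compact[OF N B]
    by (simp add: ennreal_mult_less_top)
  finally show "emeasure (M \<Otimes>\<^sub>M N) (A \<times> B) < \<infinity>" .
qed

lemma integrable_shear_products:
  fixes f g :: "'a::{topological_ab_group_add, t2_space} \<Rightarrow> real"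
  assumes countable: "second_countable (euclidean :: 'a topology)"
    and sigma: "sigma_compact (UNIV :: 'a set)"
    and M: "invariant_borel_measure M" and N: "invariant_borel_measure N"
    and f: "continuous_compact_support f" and g: "continuous_compact_support g"
  shows "integrable (M \<Otimes>\<^sub>M N) (\<lambda>(x, y). f x * g (x + y))"
    and "integrable (M \<Otimes>\<^sub>M N) (\<lambda>(x, y). f (x - y) * g x)"
proof -
  define Sf where "Sf = closure {x. f x \<noteq> 0}"
  define Sg where "Sg = closure {x. g x \<noteq> 0}"
  have Sf: "compact Sf" "\<And>x. x \<notin> Sf \<Longrightarrow> f x = 0" and Sg: "compact Sg" "\<And>x. x \<notin> Sg \<Longrightarrow> g x = 0"
    using f g closure_support_vanish unfolding continuous_compact_support_def Sf_def Sg_def by auto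
  have fc: "continuous_on UNIV f" and gc: "continuous_on UNIV g"
    using f g unfolding continuous_compact_support_def by auto
  define D where "D = (\<lambda>p. snd p - fst p) ` (Sf \<times> Sg)"
  have D: "compact D"
    unfolding D_def by (intro compact_continuous_image compact_Times Sf Sg continuous_intros)
  have "integrable (M \<Otimes>\<^sub>M N) (\<lambda>p. f (fst p) * g (fst p + snd p))"
  proof (rule integrable_pair_vanishing_outside_compact[OF countable sigma M N _ Sf(1) D])
    show "continuous_on UNIV (\<lambda>p. f (fst p) * g (fst p + snd p))"
      by (intro continuous_on_mult continuous_on_compose2[OF fc, of UNIV]
          continuous_on_compose2[OF gc, of UNIV] continuous_intros) auto
    show "f (fst p) * g (fst p + snd p) = 0" if "p \<notin> Sf \<times> D" for p
    proof (rule ccontr)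
      assume "f (fst p) * g (fst p + snd p) \<noteq> 0"
      then have "fst p \<in> Sf" "fst p + snd p \<in> Sg"
        using Sf(2) Sg(2) by auto
      then have "snd p \<in> D"
        unfolding D_def by (intro image_eqI[of _ _ "(fst p, fst p + snd p)"]) auto
      then show False
        using that \<open>fst p \<in> Sf\<close> by (cases p) auto
    qed
  qed
  then show "integrable (M \<Otimes>\<^sub>M N) (\<lambda>(x, y). f x * g (x + y))"
    by (simp add: case_prod_beta')
  have "integrable (M \<Otimes>\<^sub>M N) (\<lambda>p. f (fst p - snd p) * g (fst p))"
  proof (rule integrable_pair_vanishing_outside_compact[OF countable sigma M N _ Sg(1) D])
    show "continuous_on UNIV (\<lambda>p. f (fst p - snd p) * g (fst p))"
      by (intro continuous_on_mult continuous_on_compose2[OF fc, of UNIV]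
          continuous_on_compose2[OF gc, of UNIV] continuous_intros) auto
    show "f (fst p - snd p) * g (fst p) = 0" if "p \<notin> Sg \<times> D" for p
    proof (rule ccontr)
      assume "f (fst p - snd p) * g (fst p) \<noteq> 0"
      then have "fst p - snd p \<in> Sf" "fst p \<in> Sg"
        using Sf(2) Sg(2) by auto
      then have "snd p \<in> D"
        unfolding D_def by (intro image_eqI[of _ _ "(fst p - snd p, fst p)"]) auto
      then show False
        using that \<open>fst p \<in> Sg\<close> by (cases p) auto
    qed
  qed
  then show "integrable (M \<Otimes>\<^sub>M N) (\<lambda>(x, y). f (x - y) * g x)"
    by (simp add: case_prod_beta')
qed

text \<open>Both sides equal the double integral of \<open>f x * g (x + y)\<close> over \<open>M \<Otimes> N\<close>, computed once by
  integrating first in \<open>y\<close> and once, after the substitution \<open>x \<mapsto> x - y\<close>, first in \<open>x\<close>.\<close>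
lemma integral_invariant_mult_eq:
  fixes f g :: "'a::{topological_ab_group_add, t2_space} \<Rightarrow> real"
  assumes countable: "second_countable (euclidean :: 'a topology)"
    and sigma: "sigma_compact (UNIV :: 'a set)"
    and M: "invariant_borel_measure M" and N: "invariant_borel_measure N"
    and f: "continuous_compact_support f" and g: "continuous_compact_support g"
  shows "integral\<^sup>L M f * integral\<^sup>L N g = integral\<^sup>L M g * (\<integral>y. f (- y) \<partial>N)"
proof -
  interpret pair_sigma_finite M N
    unfolding pair_sigma_finite_def using sigma_finite_invariant[OF sigma] M N by blast
  have fubini1: "(\<integral>y. (\<integral>x. f x * g (x + y) \<partial>M) \<partial>N) = (\<integral>x. (\<integral>y. f x * g (x + y) \<partial>N) \<partial>M)"
    and fubini2: "(\<integral>y. (\<integral>x. f (x - y) * g x \<partial>M) \<partial>N) = (\<integral>x. (\<integral>y. f (x - y) * g x \<partial>N) \<partial>M)"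
    using integrable_shear_products[OF assms] by (simp_all add: Fubini_integral)
  have fc: "continuous_on UNIV f" and gc: "continuous_on UNIV g"
    using f g unfolding continuous_compact_support_def by auto
  have inner_g: "(\<integral>y. g (x + y) \<partial>N) = integral\<^sup>L N g" for x
    using integral_invariant_translate[OF N borel_measurable_continuous_onI[OF gc], of x]
    by (simp add: add.commute)
  have shift: "(\<integral>x. f x * g (x + y) \<partial>M) = (\<integral>x. f (x - y) * g x \<partial>M)" for y
  proof -
    have "(\<lambda>x. f (x - y) * g x) \<in> borel_measurable borel"
      by (intro borel_measurable_continuous_onI continuous_on_mult continuous_on_compose2[OF fc, of UNIV]
          continuous_on_compose2[OF gc, of UNIV] continuous_intros) auto
    from integral_invariant_translate[OF M this, of y] show ?thesis
      by simp
  qed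
  have inner_f: "(\<integral>y. f (x - y) \<partial>N) = (\<integral>y. f (- y) \<partial>N)" for x
  proof -
    have "(\<lambda>z. f (- z)) \<in> borel_measurable borel"
      by (intro borel_measurable_continuous_onI continuous_on_compose2[OF fc, of UNIV] continuous_intros) auto
    from integral_invariant_translate[OF N this, of "- x"] show ?thesis
      by (simp add: algebra_simps)
  qed
  have "integral\<^sup>L M f * integral\<^sup>L N g = (\<integral>x. (\<integral>y. f x * g (x + y) \<partial>N) \<partial>M)"
    by (simp add: inner_g)
  also have "\<dots> = (\<integral>y. (\<integral>x. f (x - y) * g x \<partial>M) \<partial>N)"
    by (simp only: shift[symmetric] fubini1)
  also have "\<dots> = (\<integral>x. (\<integral>y. f (- y) \<partial>N) * g x \<partial>M)"
    by (simp only: fubini2) (simp add: inner_f)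
  also have "\<dots> = integral\<^sup>L M g * (\<integral>y. f (- y) \<partial>N)"
    by (simp add: mult.commute)
  finally show ?thesis .
qed

lemma invariant_measures_proportional:
  fixes f g :: "'a::{topological_ab_group_add, t2_space} \<Rightarrow> real"
  assumes "second_countable (euclidean :: 'a topology)" "sigma_compact (UNIV :: 'a set)"
    and M: "invariant_borel_measure M" and N: "invariant_borel_measure N"
    and "continuous_compact_support f" "continuous_compact_support g"
    and "integral\<^sup>L N g \<noteq> 0"
  shows "integral\<^sup>L M f * integral\<^sup>L N g = integral\<^sup>L M g * integral\<^sup>L N f"
proof -
  have "integral\<^sup>L N f * integral\<^sup>L N g = integral\<^sup>L N g * (\<integral>y. f (- y) \<partial>N)"
    using integral_invariant_mult_eq[OF assms(1,2) N N assms(5,6)] .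
  then have "(\<integral>y. f (- y) \<partial>N) = integral\<^sup>L N f"
    using assms(7) by (simp add: mult.commute)
  then show ?thesis
    using integral_invariant_mult_eq[OF assms(1,2) M N assms(5,6)] by simp
qed

lemma haar_on_imp_invariant:
  "haar_on (UNIV :: 'a::{topological_ab_group_add, t2_space} set) (+) M \<Longrightarrow> invariant_borel_measure M"
  unfolding haar_on_def radon_on_def invariant_borel_measure_def by simp

lemma haar_on_emeasure_UNIV_nonzero:
  assumes "haar_on (UNIV :: 'a::{topological_ab_group_add, t2_space} set) (+) M"
  shows "emeasure M UNIV \<noteq> 0"
proof -
  obtain A where "A \<in> sets M" "emeasure M A \<noteq> 0"
    using assms unfolding haar_on_def by blast
  moreover have "emeasure M A \<le> emeasure M UNIV"
    using sets.top[of M] invariant_space[OF haar_on_imp_invariant[OF assms]]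
    by (intro emeasure_mono) simp_all
  ultimately show ?thesis
    by (metis le_zero_eq)
qed

lemma invariant_borel_measure_distr:
  fixes M :: "'a::{topological_ab_group_add, t2_space} measure"
  assumes M: "invariant_borel_measure M"
    and T: "continuous_on UNIV T" "continuous_on UNIV T'"
    and inverse: "\<And>x. T' (T x) = x" "\<And>y. T (T' y) = y"
    and additive: "\<And>x y. T (x + y) = T x + T y"
  shows "invariant_borel_measure (distr M borel T)"
proof -
  have meas: "T \<in> measurable M borel"
    using invariant_measurable_continuous[OF M T(1)] by simp
  have vimage_T: "T -` S = T' ` S" for S
  proof
    show "T -` S \<subseteq> T' ` S"
      using inverse(1) by (metis image_eqI subsetI vimageE)
    show "T' ` S \<subseteq> T -` S"
      using inverse(2) by auto
  qed
  have additive': "T' (u + v) = T' u + T' v" for u v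
    using additive[of "T' u" "T' v"] inverse by metis
  have emeasure_distr_T: "emeasure (distr M borel T) A = emeasure M (T' ` A)" if "A \<in> sets borel" for A
    using emeasure_distr[OF meas that] by (simp add: invariant_space[OF M] vimage_T)
  have "emeasure (distr M borel T) K < \<infinity>" if "compact K" for K
  proof -
    have "compact (T' ` K)"
      using that T(2) by (metis compact_continuous_image continuous_on_subset subset_UNIV)
    then show ?thesis
      using that invariant_emeasure_compact[OF M] by (simp add: emeasure_distr_T compact_imp_sets_borel)
  qed
  moreover have "emeasure (distr M borel T) ((+) a ` A) = emeasure (distr M borel T) A"
    if "A \<in> sets borel" for a A
  proof -
    have "T' ` ((+) a ` A) = (+) (T' a) ` (T' ` A)"
      by (simp add: image_image additive')
    moreover have "(+) a ` A \<in> sets borel"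
      using that by (rule sets_borel_translation)
    moreover have "T' ` A \<in> sets M"
      using measurable_sets[OF meas that] by (simp add: invariant_space[OF M] vimage_T)
    ultimately show ?thesis
      using that by (simp add: emeasure_distr_T invariant_emeasure_translate[OF M])
  qed
  ultimately show ?thesis
    unfolding invariant_borel_measure_def by simp
qed

lemma emeasure_open_pos:
  fixes M :: "'a::{topological_ab_group_add, t2_space} measure"
  assumes sigma: "sigma_compact (UNIV :: 'a set)" and M: "invariant_borel_measure M"
    and A: "A \<in> sets M" "emeasure M A \<noteq> 0"
    and U: "open U" "u \<in> U"
  shows "emeasure M U > 0"
proof (rule ccontr)
  assume "\<not> emeasure M U > 0"
  then have U0: "emeasure M U = 0"
    by (simp add: not_gr_zero)
  have translate_sets: "(+) a ` U \<in> sets M" for a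
    using open_translation_topological_group[OF U(1), of a] by (simp add: invariant_sets[OF M])
  have translate0: "emeasure M ((+) a ` U) = 0" for a
    using invariant_emeasure_translate[OF M, of U a] U0 U(1) by (simp add: invariant_sets[OF M])
  have compact0: "emeasure M K = 0" if K: "compact K" for K
  proof -
    have "K \<subseteq> (\<Union>k\<in>K. (+) (k - u) ` U)"
      using U(2) by (force simp: image_iff)
    then obtain F where F: "F \<subseteq> K" "finite F" "K \<subseteq> (\<Union>k\<in>F. (+) (k - u) ` U)"
      by (rule compactE_image[OF K open_translation_topological_group[OF U(1)]])
    have "emeasure M K \<le> emeasure M (\<Union>k\<in>F. (+) (k - u) ` U)"
      using F(2,3) translate_sets by (intro emeasure_mono) auto
    also have "\<dots> \<le> (\<Sum>k\<in>F. emeasure M ((+) (k - u) ` U))"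
      using F(2) translate_sets by (intro emeasure_subadditive_finite) auto
    also have "\<dots> = 0"
      by (simp add: translate0)
    finally show ?thesis
      by simp
  qed
  obtain K :: "nat \<Rightarrow> 'a set" where K: "\<And>n. compact (K n)" "(\<Union>n. K n) = UNIV"
    using sigma unfolding sigma_compact_def by blast
  have "emeasure M (\<Union>n. K n) = 0"
    using K(1) compact0 by (intro emeasure_UN_eq_0) (auto simp: invariant_sets[OF M] compact_imp_sets_borel)
  moreover have "emeasure M A \<le> emeasure M (\<Union>n. K n)"
    using A(1) K(2) by (intro emeasure_mono) (auto simp: invariant_sets[OF M])
  ultimately show False
    using A(2) by simp
qed

lemma integral_pos_if_support_nonnull:
  fixes f :: "'a \<Rightarrow> real"
  assumes f: "integrable M f" and nonneg: "\<And>x. 0 \<le> f x"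
    and support: "emeasure M {x\<in>space M. f x \<noteq> 0} \<noteq> 0"
  shows "integral\<^sup>L M f > 0"
proof -
  have [measurable]: "f \<in> borel_measurable M"
    using f by blast
  have "\<not> (AE x in M. f x = 0)"
    using support by (subst AE_iff_measurable[OF _ refl]) auto
  then have "integral\<^sup>L M f \<noteq> 0"
    using integral_nonneg_eq_0_iff_AE[OF f] nonneg by simp
  then show ?thesis
    using integral_nonneg_AE[of f M] nonneg by (simp add: order_le_less)
qed

lemma integral_continuous_compact_support_pos:
  fixes M :: "'a::{topological_ab_group_add, t2_space} measure"
  assumes sigma: "sigma_compact (UNIV :: 'a set)" and M: "invariant_borel_measure M"
    and A: "A \<in> sets M" "emeasure M A \<noteq> 0"
    and f: "continuous_compact_support f" "\<And>x. 0 \<le> f x" "f u \<noteq> 0"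
  shows "integral\<^sup>L M f > 0"
proof (rule integral_pos_if_support_nonnull[OF integrable_continuous_compact_support[OF M f(1)] f(2)])
  have "open {x. f x \<noteq> 0}"
    using f(1) open_vimage[OF open_Compl[OF closed_singleton[of 0]], of f]
    unfolding continuous_compact_support_def by (simp add: vimage_def)
  then have "emeasure M {x. f x \<noteq> 0} > 0"
    using emeasure_open_pos[OF sigma M A] f(3) by blast
  then show "emeasure M {x \<in> space M. f x \<noteq> 0} \<noteq> 0"
    by (simp add: invariant_space[OF M])
qed

section \<open>R-groups and their absorptive additive actions\<close>

locale R_group_struct =
  fixes E :: "real set" and emul :: "real \<Rightarrow> real \<Rightarrow> real" and eone :: real
    and einv :: "real \<Rightarrow> real"
  assumes R_group: "R_group E emul eone einv"
begin

lemma of_nat_in_E: "n \<ge> 1 \<Longrightarrow> real n \<in> E"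
  and emul_in_E: "x \<in> E \<Longrightarrow> y \<in> E \<Longrightarrow> emul x y \<in> E"
  and emul_assoc: "x \<in> E \<Longrightarrow> y \<in> E \<Longrightarrow> z \<in> E \<Longrightarrow> emul (emul x y) z = emul x (emul y z)"
  and emul_commute: "x \<in> E \<Longrightarrow> y \<in> E \<Longrightarrow> emul x y = emul y x"
  and eone_in_E: "eone \<in> E"
  and emul_eone_left: "x \<in> E \<Longrightarrow> emul eone x = x"
  and einv_in_E: "x \<in> E \<Longrightarrow> einv x \<in> E"
  and emul_einv_left: "x \<in> E \<Longrightarrow> emul (einv x) x = eone"
  and emul_mono: "x \<in> E \<Longrightarrow> y \<in> E \<Longrightarrow> z \<in> E \<Longrightarrow> x \<le> y \<Longrightarrow> emul z x \<le> emul z y"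
  using R_group unfolding R_group_def by blast+

lemma emul_einv_right: "x \<in> E \<Longrightarrow> emul x (einv x) = eone"
  by (metis emul_commute einv_in_E emul_einv_left)

lemma emul_eone_right: "x \<in> E \<Longrightarrow> emul x eone = x"
  by (metis emul_commute eone_in_E emul_eone_left)

lemma einv_einv:
  assumes "x \<in> E"
  shows "einv (einv x) = x"
proof -
  have "einv (einv x) = emul (einv (einv x)) (emul (einv x) x)"
    using assms by (simp add: emul_einv_left emul_eone_right einv_in_E)
  also have "\<dots> = emul (emul (einv (einv x)) (einv x)) x"
    using assms by (simp add: emul_assoc einv_in_E)
  also have "\<dots> = x"
    using assms by (simp add: emul_einv_left emul_eone_left einv_in_E)
  finally show ?thesis .
qed

lemma einv_antimono:
  assumes "x \<in> E" "y \<in> E" "x \<le> y"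
  shows "einv y \<le> einv x"
proof -
  define z where "z = emul (einv x) (einv y)"
  have "z \<in> E"
    using assms by (simp add: z_def emul_in_E einv_in_E)
  moreover have "emul z x = einv y" "emul z y = einv x"
    using assms unfolding z_def
    by (metis emul_assoc emul_commute einv_in_E emul_einv_left emul_eone_right)+
  ultimately show ?thesis
    using emul_mono[OF assms(1,2) _ assms(3)] by metis
qed

lemma eventually_einv_of_nat_le:
  assumes "\<alpha> \<in> E"
  shows "\<exists>N\<ge>1. \<forall>n\<ge>N. einv (real n) \<le> \<alpha>"
proof -
  obtain N :: nat where N: "einv \<alpha> \<le> real N" "N \<ge> 1"
    by (metis max.cobounded1 max.cobounded2 order_trans real_arch_simple of_nat_le_iff)
  have "einv (real n) \<le> \<alpha>" if "n \<ge> N" for n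
  proof -
    have "einv \<alpha> \<le> real n" "n \<ge> 1"
      using N that by linarith+
    then have "einv (real n) \<le> einv (einv \<alpha>)"
      using einv_antimono assms by (simp add: einv_in_E of_nat_in_E)
    then show ?thesis
      using assms by (simp add: einv_einv)
  qed
  then show ?thesis
    using N(2) by blast
qed

end

locale additive_absorptive_action = R_group_struct E emul eone einv
  for E emul eone einv +
  fixes H :: "real \<Rightarrow> 'g::{topological_ab_group_add, t2_space} \<Rightarrow> 'g"
  assumes act: "group_action E emul eone H"
    and cont: "continuous_action E H"
    and absorb: "absorptive E einv H"
    and additive: "\<forall>\<epsilon>\<in>E. \<forall>x y. H \<epsilon> (x + y) = H \<epsilon> x + H \<epsilon> y"
begin

lemma H_H: "\<epsilon> \<in> E \<Longrightarrow> \<epsilon>' \<in> E \<Longrightarrow> H \<epsilon> (H \<epsilon>' x) = H (emul \<epsilon> \<epsilon>') x"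
  using act unfolding group_action_def by (metis comp_apply)

lemma H_eone: "H eone x = x"
  using act unfolding group_action_def by simp

lemma H_H_einv: "\<epsilon> \<in> E \<Longrightarrow> H \<epsilon> (H (einv \<epsilon>) x) = x"
  by (simp add: H_H einv_in_E emul_einv_right H_eone)

lemma H_einv_H: "\<epsilon> \<in> E \<Longrightarrow> H (einv \<epsilon>) (H \<epsilon> x) = x"
  by (simp add: H_H einv_in_E emul_einv_left H_eone)

lemma H_add: "\<epsilon> \<in> E \<Longrightarrow> H \<epsilon> (x + y) = H \<epsilon> x + H \<epsilon> y"
  using additive by blast

lemma H_zero: "\<epsilon> \<in> E \<Longrightarrow> H \<epsilon> 0 = 0"
  using H_add[of \<epsilon> 0 0] by simp

lemma H_diff:
  assumes "\<epsilon> \<in> E"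
  shows "H \<epsilon> (x - y) = H \<epsilon> x - H \<epsilon> y"
proof -
  have "H \<epsilon> x = H \<epsilon> (x - y) + H \<epsilon> y"
    using H_add[OF assms, of "x - y" y] by simp
  then show ?thesis
    by (simp add: algebra_simps)
qed

lemma H_eq_iff:
  assumes "\<epsilon> \<in> E"
  shows "H \<epsilon> x = H \<epsilon> y \<longleftrightarrow> x = y"
  by (metis H_einv_H[OF assms])

lemma continuous_on_H:
  assumes "\<epsilon> \<in> E"
  shows "continuous_on UNIV (H \<epsilon>)"
proof -
  have "continuous_on UNIV ((\<lambda>(\<epsilon>, x). H \<epsilon> x) \<circ> Pair \<epsilon>)"
    using cont assms unfolding continuous_action_def
    by (intro continuous_on_compose continuous_intros) (auto elim: continuous_on_subset)
  then show ?thesis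
    by (simp add: o_def)
qed

lemma compact_image_H: "\<epsilon> \<in> E \<Longrightarrow> compact S \<Longrightarrow> compact (H \<epsilon> ` S)"
  using continuous_on_H compact_continuous_image continuous_on_subset by blast

lemma absorbing_point_eq_zero:
  assumes "absorbing_point E einv H \<omega>"
  shows "\<omega> = 0"
proof (rule ccontr)
  assume "\<omega> \<noteq> 0"
  then obtain V where V: "open V" "\<omega> \<in> V" "0 \<notin> V"
    using t1_space by blast
  with assms obtain U \<alpha> where "0 \<in> U" "\<alpha> \<in> E" "\<forall>\<epsilon>\<in>E. \<epsilon> \<le> \<alpha> \<longrightarrow> H (einv \<epsilon>) ` U \<subseteq> V"
    unfolding absorbing_point_def by (metis (no_types))
  then have "H (einv \<alpha>) 0 \<in> V"
    by blast
  then show False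
    using V(3) H_zero einv_in_E \<open>\<alpha> \<in> E\<close> by simp
qed

lemma absorbing_point_zero: "absorbing_point E einv H 0"
  using absorb absorbing_point_eq_zero unfolding absorptive_def by blast

lemma action_center_eq_zero: "action_center E einv H = 0"
  unfolding action_center_def using absorbing_point_zero absorbing_point_eq_zero
  by (rule the_equality)

lemma eventually_H_nhd_subset:
  assumes V: "open V" "0 \<in> V"
  shows "\<exists>U. open U \<and> x \<in> U \<and> (\<exists>N\<ge>1. \<forall>n\<ge>N. H (real n) ` U \<subseteq> V)"
proof -
  from absorbing_point_zero V obtain U \<alpha> where U: "open U" "x \<in> U" "\<alpha> \<in> E"
    and absorbed: "\<forall>\<epsilon>\<in>E. \<epsilon> \<le> \<alpha> \<longrightarrow> H (einv \<epsilon>) ` U \<subseteq> V"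
    unfolding absorbing_point_def by (metis (no_types))
  obtain N where N: "N \<ge> 1" "\<forall>n\<ge>N. einv (real n) \<le> \<alpha>"
    using eventually_einv_of_nat_le[OF U(3)] by blast
  have "H (real n) ` U \<subseteq> V" if "n \<ge> N" for n
  proof -
    have n: "real n \<in> E"
      using that N(1) by (intro of_nat_in_E) simp
    then have "H (einv (einv (real n))) ` U \<subseteq> V"
      using absorbed einv_in_E N(2) that by blast
    then show ?thesis
      by (simp add: einv_einv[OF n])
  qed
  then show ?thesis
    using U(1,2) N(1) by blast
qed

text \<open>Absorption at \<open>0\<close>, made uniform on a compact set by a finite subcover.\<close>
lemma compact_eventually_H_subset:
  assumes C: "compact C" and V: "open V" "0 \<in> V"
  shows "\<exists>N\<ge>1. \<forall>n\<ge>N. H (real n) ` C \<subseteq> V"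
proof -
  have "\<forall>x. \<exists>U. open U \<and> x \<in> U \<and> (\<exists>N\<ge>1. \<forall>n\<ge>N. H (real n) ` U \<subseteq> V)"
    using eventually_H_nhd_subset[OF V] by blast
  then obtain U N where "\<forall>x. open (U x) \<and> x \<in> U x \<and> N x \<ge> (1::nat) \<and>
      (\<forall>n\<ge>N x. H (real n) ` U x \<subseteq> V)"
    by metis
  then have U: "\<And>x. open (U x)" "\<And>x. x \<in> U x"
    and N: "\<And>x. N x \<ge> 1" "\<And>x n. n \<ge> N x \<Longrightarrow> H (real n) ` U x \<subseteq> V"
    by auto
  obtain F where F: "F \<subseteq> C" "finite F" "C \<subseteq> (\<Union>c\<in>F. U c)"
    using compactE_image[OF C, of C U] U by blast
  define N\<^sub>F where "N\<^sub>F = Max (insert 1 (N ` F))"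
  have "H (real n) ` C \<subseteq> V" if "n \<ge> N\<^sub>F" for n
  proof
    fix y assume "y \<in> H (real n) ` C"
    then obtain x where x: "x \<in> C" "y = H (real n) x"
      by blast
    then obtain c where c: "c \<in> F" "x \<in> U c"
      using F(3) by blast
    have "N c \<le> N\<^sub>F"
      unfolding N\<^sub>F_def using F(2) c(1) by (intro Max_ge) auto
    then have "H (real n) ` U c \<subseteq> V"
      using that N(2) by simp
    then show "y \<in> V"
      using x(2) c(2) by blast
  qed
  moreover have "N\<^sub>F \<ge> 1"
    unfolding N\<^sub>F_def using F(2) by simp
  ultimately show ?thesis
    by (intro exI[of _ N\<^sub>F]) auto
qed

lemma compact_H_image_subset:
  assumes "compact C" "open V" "0 \<in> V"
  obtains n where "n \<ge> 1" "H (real n) ` C \<subseteq> V"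
proof -
  obtain N where "N \<ge> 1" "\<forall>n\<ge>N. H (real n) ` C \<subseteq> V"
    using compact_eventually_H_subset[OF assms] by blast
  then show thesis
    using that[of N] by simp
qed

lemma not_compact_UNIV:
  assumes "x \<noteq> (0::'g)"
  shows "\<not> compact (UNIV :: 'g set)"
proof
  assume UNIV: "compact (UNIV :: 'g set)"
  obtain V where V: "open V" "0 \<in> V" "x \<notin> V"
    using t1_space[of 0 x] assms by blast
  obtain N where N: "N \<ge> 1" "H (real N) ` UNIV \<subseteq> V"
    using compact_H_image_subset[OF UNIV V(1,2)] by blast
  have "x = H (real N) (H (einv (real N)) x)"
    using H_H_einv[OF of_nat_in_E[OF N(1)]] by simp
  also have "\<dots> \<in> V"
    using N(2) by blast
  finally show False
    using V(3) by simp
qed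

lemma not_open_singleton_zero:
  assumes "x \<noteq> (0::'g)"
  shows "\<not> open {0::'g}"
proof
  assume "open {0::'g}"
  then obtain N where N: "N \<ge> 1" "H (real N) ` {x} \<subseteq> {0}"
    using compact_H_image_subset[OF compact_sing] by blast
  then have "H (real N) x = H (real N) 0"
    using H_zero[OF of_nat_in_E[OF N(1)]] by simp
  then show False
    using assms H_eq_iff[OF of_nat_in_E[OF N(1)]] by simp
qed

lemma invariant_distr_H:
  assumes M: "invariant_borel_measure M" and \<epsilon>: "\<epsilon> \<in> E"
  shows "invariant_borel_measure (distr M borel (H \<epsilon>))"
    and "emeasure (distr M borel (H \<epsilon>)) UNIV = emeasure M UNIV"
proof -
  show "invariant_borel_measure (distr M borel (H \<epsilon>))"
    using M continuous_on_H[OF \<epsilon>] continuous_on_H[OF einv_in_E[OF \<epsilon>]]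
    by (rule invariant_borel_measure_distr) (simp_all add: \<epsilon> H_einv_H H_H_einv H_add)
  show "emeasure (distr M borel (H \<epsilon>)) UNIV = emeasure M UNIV"
    using emeasure_distr[OF invariant_measurable_continuous[OF M continuous_on_H[OF \<epsilon>]], of UNIV]
    by (simp add: invariant_space[OF M])
qed

lemma nontrivial_haar:
  assumes haar: "haar_on (UNIV :: 'g set) (+) lam" and x: "x \<noteq> (0::'g)"
  shows "nontrivial_measure E einv H lam"
  unfolding nontrivial_measure_def action_center_eq_zero
proof
  show "\<exists>A\<in>sets lam. emeasure lam A \<noteq> 0"
    using haar unfolding haar_on_def by blast
  have M: "invariant_borel_measure lam"
    using haar by (rule haar_on_imp_invariant)
  have "{0} \<in> sets lam" "{x} \<in> sets lam"
    by (simp_all add: invariant_sets[OF M])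
  moreover have "emeasure lam {x} = emeasure lam {0}"
    using invariant_emeasure_translate[OF M \<open>{0} \<in> sets lam\<close>, of x] by simp
  ultimately show "\<exists>A\<in>sets lam. emeasure lam A \<noteq> indicator A 0"
    using x by (metis indicator_simps(1,2) insertI1 singletonD zero_neq_one)
qed

end

section \<open>Countable base, metrizability and homogeneity of Haar measures\<close>

locale absorptive_action_with_bump = additive_absorptive_action E emul eone einv H
  for E emul eone einv and H :: "real \<Rightarrow> 'g::{topological_ab_group_add, t2_space} \<Rightarrow> 'g" +
  fixes K0 :: "'g set" and \<psi> :: "'g \<Rightarrow> real"
  assumes compact_K0: "compact K0"
    and continuous_map_\<psi>: "continuous_map euclidean (top_of_set {0..1}) \<psi>"
    and \<psi>_zero: "\<psi> 0 = 0"
    and \<psi>_outside: "\<And>y. y \<notin> K0 \<Longrightarrow> \<psi> y = 1"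
begin

lemma continuous_on_\<psi>: "continuous_on UNIV \<psi>"
  using continuous_map_\<psi> by (simp add: continuous_map_in_subtopology)

lemma \<psi>_range: "\<psi> y \<in> {0..1}"
  using continuous_map_\<psi> by (auto simp: continuous_map_def)

lemma open_\<psi>_less: "open {y. \<psi> y < c}"
  using open_vimage[OF open_lessThan continuous_on_\<psi>, of c] by (simp add: vimage_def)

lemma \<psi>_less_one_subset: "{y. \<psi> y < 1} \<subseteq> K0"
  using \<psi>_outside by force

lemma Suc_in_E: "real (Suc m) \<in> E"
  by (rule of_nat_in_E) simp

lemma Union_contracted_K0: "(\<Union>m. H (einv (real (Suc m))) ` K0) = UNIV"
proof -
  have "x \<in> (\<Union>m. H (einv (real (Suc m))) ` K0)" for x
  proof -
    have "\<psi> 0 < 1"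
      by (simp add: \<psi>_zero)
    then obtain N where "N \<ge> 1" "H (real N) ` {x} \<subseteq> {y. \<psi> y < 1}"
      using compact_H_image_subset[OF compact_sing open_\<psi>_less] by blast
    moreover obtain m where "N = Suc m"
      using \<open>N \<ge> 1\<close> by (cases N) auto
    ultimately have m: "H (real (Suc m)) x \<in> K0"
      using \<psi>_less_one_subset by blast
    have "x = H (einv (real (Suc m))) (H (real (Suc m)) x)"
      using H_einv_H[OF Suc_in_E] by simp
    then have "x \<in> H (einv (real (Suc m))) ` K0"
      using m by (rule image_eqI)
    then show ?thesis
      by blast
  qed
  then show ?thesis
    by blast
qed

lemma sigma_compact_UNIV: "sigma_compact (UNIV :: 'g set)"
  unfolding sigma_compact_def
proof (intro exI conjI allI)
  show "compact (H (einv (real (Suc m))) ` K0)" for m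
    by (intro compact_image_H einv_in_E Suc_in_E compact_K0)
qed (rule Union_contracted_K0)

definition scaled_bump :: "nat \<Rightarrow> 'g \<Rightarrow> 'g \<Rightarrow> real" where
  "scaled_bump n d y = \<psi> (H (einv (real n)) (y - d))"

lemma continuous_on_scaled_bump:
  assumes "n \<ge> 1"
  shows "continuous_on UNIV (scaled_bump n d)"
proof -
  have "continuous_on UNIV (\<lambda>y. H (einv (real n)) (y - d))"
    using continuous_on_H[OF einv_in_E[OF of_nat_in_E[OF assms]]]
    by (rule continuous_on_compose2) (auto intro: continuous_intros)
  then show ?thesis
    unfolding scaled_bump_def by (rule continuous_on_compose2[OF continuous_on_\<psi>]) auto
qed

lemma continuous_map_scaled_bump:
  "n \<ge> 1 \<Longrightarrow> continuous_map euclidean (top_of_set {0..1}) (scaled_bump n d)"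
  using continuous_on_scaled_bump \<psi>_range
  by (auto simp: continuous_map_in_subtopology scaled_bump_def)

lemma scaled_bump_self: "n \<ge> 1 \<Longrightarrow> scaled_bump n d d = 0"
  by (simp add: scaled_bump_def H_zero einv_in_E of_nat_in_E \<psi>_zero)

lemma open_scaled_bump_less:
  assumes "n \<ge> 1"
  shows "open {y. scaled_bump n d y < c}"
  using open_vimage[OF open_lessThan[of c] continuous_on_scaled_bump[OF assms, of d]]
  by (simp add: vimage_def)

lemma scaled_bump_less_oneD:
  assumes "n \<ge> 1" "scaled_bump n d y < 1"
  shows "y - d \<in> H (real n) ` K0"
proof -
  have "H (einv (real n)) (y - d) \<in> K0"
    using assms(2) \<psi>_less_one_subset unfolding scaled_bump_def by blast
  moreover have "y - d = H (real n) (H (einv (real n)) (y - d))"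
    using H_H_einv[OF of_nat_in_E[OF assms(1)]] by simp
  ultimately show ?thesis
    by (rule rev_image_eqI)
qed

text \<open>The size of the sets \<open>{scaled_bump n d < 1}\<close> is controlled uniformly in \<open>d\<close>: their
  differences lie in \<open>H n (K0 - K0)\<close>, which absorption pushes into any neighbourhood of \<open>0\<close>.\<close>
lemma exists_small_scaled_bump:
  assumes "open U" "x \<in> U"
  shows "\<exists>n\<ge>1. \<forall>d. scaled_bump n d x < 1 \<longrightarrow> {y. scaled_bump n d y < 1} \<subseteq> U"
proof -
  define C where "C = (\<lambda>p. fst p - snd p) ` (K0 \<times> K0)"
  have "compact C"
    unfolding C_def by (intro compact_continuous_image compact_Times compact_K0 continuous_intros)
  moreover have "open {z. x + z \<in> U}"
    using open_vimage[OF assms(1), of "\<lambda>z. x + z"] by (simp add: vimage_def continuous_intros)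
  moreover have "0 \<in> {z. x + z \<in> U}"
    using assms(2) by simp
  ultimately obtain n where n: "n \<ge> 1" "H (real n) ` C \<subseteq> {z. x + z \<in> U}"
    by (rule compact_H_image_subset)
  have "y \<in> U" if x: "scaled_bump n d x < 1" and y: "scaled_bump n d y < 1" for d y
  proof -
    obtain a where a: "a \<in> K0" "y - d = H (real n) a"
      using scaled_bump_less_oneD[OF n(1) y] by blast
    obtain b where b: "b \<in> K0" "x - d = H (real n) b"
      using scaled_bump_less_oneD[OF n(1) x] by blast
    have "y - x = (y - d) - (x - d)"
      by simp
    also have "\<dots> = H (real n) (a - b)"
      using a(2) b(2) H_diff[OF of_nat_in_E[OF n(1)]] by simp
    finally have "y - x \<in> H (real n) ` C"
      unfolding C_def using a(1) b(1) by (auto intro!: image_eqI[of _ _ "(a, b)"])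
    then have "x + (y - x) \<in> U"
      using n(2) by blast
    then show "y \<in> U"
      by simp
  qed
  then show ?thesis
    using n(1) by blast
qed

lemma finite_scaled_bump_net:
  assumes n: "n \<ge> 1"
  obtains D where "finite D" "H (einv (real (Suc m))) ` K0 \<subseteq> (\<Union>d\<in>D. {y. scaled_bump n d y < 1})"
proof -
  have "z \<in> {y. scaled_bump n z y < 1}" for z
    using scaled_bump_self[OF n, of z] by simp
  then have cover: "H (einv (real (Suc m))) ` K0 \<subseteq> (\<Union>d\<in>UNIV. {y. scaled_bump n d y < 1})"
    by blast
  have "compact (H (einv (real (Suc m))) ` K0)"
    by (intro compact_image_H einv_in_E Suc_in_E compact_K0)
  then obtain D where D: "D \<subseteq> UNIV" "finite D"
      "H (einv (real (Suc m))) ` K0 \<subseteq> (\<Union>d\<in>D. {y. scaled_bump n d y < 1})"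
    using compactE_image[of _ UNIV "\<lambda>d. {y. scaled_bump n d y < 1}"] open_scaled_bump_less[OF n] cover
    by metis
  then show thesis
    by (intro that[OF D(2,3)])
qed

lemma countable_scaled_bump_base:
  obtains K :: "('g \<Rightarrow> real) set" where "countable K"
    and "\<And>g. g \<in> K \<Longrightarrow> continuous_map euclidean (top_of_set {0..1}) g"
    and "\<And>U x. open U \<Longrightarrow> (x::'g) \<in> U \<Longrightarrow> \<exists>g\<in>K. g x < 1 \<and> {y. g y < 1} \<subseteq> U"
proof -
  have "\<exists>D. finite D \<and> H (einv (real (Suc m))) ` K0 \<subseteq> (\<Union>d\<in>D. {y. scaled_bump n d y < 1})"
    if "n \<ge> 1" for n m
    by (rule finite_scaled_bump_net[OF that]) blast
  then obtain D where D: "\<And>n m. n \<ge> 1 \<Longrightarrow>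
      finite (D n m) \<and> H (einv (real (Suc m))) ` K0 \<subseteq> (\<Union>d\<in>D n m. {y. scaled_bump n d y < 1})"
    by metis
  define K where "K = (\<lambda>(n, d). scaled_bump n d) ` (SIGMA n:{1..}. \<Union>m. D n m)"
  show ?thesis
  proof (rule that)
    show "countable K"
      unfolding K_def using D
      by (intro countable_image countable_SIGMA countable_UN) (auto intro: countable_finite)
    show "continuous_map euclidean (top_of_set {0..1}) g" if "g \<in> K" for g
      using that continuous_map_scaled_bump unfolding K_def by auto
    fix U and x :: 'g
    assume "open U" "x \<in> U"
    then obtain n where n: "n \<ge> 1"
      and small: "\<And>d. scaled_bump n d x < 1 \<Longrightarrow> {y. scaled_bump n d y < 1} \<subseteq> U"
      using exists_small_scaled_bump by blast
    obtain m where "x \<in> H (einv (real (Suc m))) ` K0"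
      using Union_contracted_K0 by blast
    then obtain d where "d \<in> D n m" "scaled_bump n d x < 1"
      using D[OF n] by blast
    moreover from this have "scaled_bump n d \<in> K"
      unfolding K_def using n by force
    ultimately show "\<exists>g\<in>K. g x < 1 \<and> {y. g y < 1} \<subseteq> U"
      using small by blast
  qed
qed

lemma metrizable_UNIV: "metrizable_space (euclidean :: 'g topology)"
  using countable_scaled_bump_base metrizable_space_of_countable_sublevel_base by metis

lemma second_countable_UNIV: "second_countable (euclidean :: 'g topology)"
proof -
  obtain K :: "('g \<Rightarrow> real) set" where K: "countable K"
    "\<And>g. g \<in> K \<Longrightarrow> continuous_map euclidean (top_of_set {0..1}) g"
    "\<And>U x. open U \<Longrightarrow> (x::'g) \<in> U \<Longrightarrow> \<exists>g\<in>K. g x < 1 \<and> {y. g y < 1} \<subseteq> U"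
    using countable_scaled_bump_base by metis
  have "open {y. g y < 1}" if "g \<in> K" for g
    using open_vimage[OF open_lessThan, of g 1] K(2)[OF that]
    by (simp add: vimage_def continuous_map_in_subtopology)
  then show ?thesis
    unfolding second_countable_def using K(1,3)
    by (intro exI[of _ "(\<lambda>g. {y. g y < 1}) ` K"]) auto
qed

lemma continuous_compact_support_bump: "continuous_compact_support (\<lambda>y. 1 - \<psi> y)"
  unfolding continuous_compact_support_def
proof
  show "continuous_on UNIV (\<lambda>y. 1 - \<psi> y)"
    by (intro continuous_intros continuous_on_\<psi>)
  have "{y. 1 - \<psi> y \<noteq> 0} \<subseteq> K0"
    using \<psi>_outside by force
  then have "closure {y. 1 - \<psi> y \<noteq> 0} \<subseteq> K0"
    using compact_K0 by (simp add: closure_minimal compact_imp_closed)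
  then have "K0 \<inter> closure {y. 1 - \<psi> y \<noteq> 0} = closure {y. 1 - \<psi> y \<noteq> 0}"
    by blast
  then show "compact (closure {y. 1 - \<psi> y \<noteq> 0})"
    using compact_Int_closed[OF compact_K0 closed_closure] by metis
qed

lemma integral_bump_pos:
  assumes M: "invariant_borel_measure M" and nonzero: "emeasure M UNIV \<noteq> 0"
  shows "(\<integral>y. 1 - \<psi> y \<partial>M) > 0"
proof (rule integral_continuous_compact_support_pos[OF sigma_compact_UNIV M _ nonzero
      continuous_compact_support_bump])
  show "UNIV \<in> sets M"
    using sets.top[of M] by (simp add: invariant_space[OF M])
  show "0 \<le> 1 - \<psi> y" for y
    using \<psi>_range[of y] by simp
  show "1 - \<psi> 0 \<noteq> 0"
    by (simp add: \<psi>_zero)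
qed

lemma homogeneous_haar:
  assumes haar: "haar_on (UNIV :: 'g set) (+) lam"
  shows "homogeneous_measure E H lam"
  unfolding homogeneous_measure_def
proof
  fix \<epsilon>
  assume \<epsilon>: "\<epsilon> \<in> E"
  have M: "invariant_borel_measure lam"
    using haar by (rule haar_on_imp_invariant)
  have meas: "H \<epsilon> \<in> measurable lam borel"
    using invariant_measurable_continuous[OF M continuous_on_H[OF \<epsilon>]] by simp
  define M\<epsilon> where "M\<epsilon> = distr lam borel (H \<epsilon>)"
  have M\<epsilon>: "invariant_borel_measure M\<epsilon>" "emeasure M\<epsilon> UNIV = emeasure lam UNIV"
    unfolding M\<epsilon>_def using invariant_distr_H[OF M \<epsilon>] by auto
  have pos: "(\<integral>y. 1 - \<psi> y \<partial>lam) > 0" "(\<integral>y. 1 - \<psi> y \<partial>M\<epsilon>) > 0"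
    using integral_bump_pos M M\<epsilon> haar_on_emeasure_UNIV_nonzero[OF haar] by simp_all
  define c where "c = (\<integral>y. 1 - \<psi> y \<partial>M\<epsilon>) / (\<integral>y. 1 - \<psi> y \<partial>lam)"
  have scaling: "(\<integral>x. \<phi> (H \<epsilon> x) \<partial>lam) = c * integral\<^sup>L lam \<phi>"
    if "continuous_on UNIV \<phi> \<and> compact (closure {x. \<phi> x \<noteq> 0})" for \<phi> :: "'g \<Rightarrow> real"
  proof -
    have \<phi>: "continuous_compact_support \<phi>"
      using that unfolding continuous_compact_support_def .
    have "(\<integral>x. \<phi> (H \<epsilon> x) \<partial>lam) = integral\<^sup>L M\<epsilon> \<phi>"
      unfolding M\<epsilon>_def using that by (intro integral_distr[OF meas, symmetric] borel_measurable_continuous_onI) simp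
    moreover have "integral\<^sup>L M\<epsilon> \<phi> * (\<integral>y. 1 - \<psi> y \<partial>lam) = (\<integral>y. 1 - \<psi> y \<partial>M\<epsilon>) * integral\<^sup>L lam \<phi>"
      using pos(1) by (intro invariant_measures_proportional[OF second_countable_UNIV sigma_compact_UNIV
            M\<epsilon>(1) M \<phi> continuous_compact_support_bump]) simp
    ultimately show ?thesis
      unfolding c_def using pos(1) by (simp add: field_simps)
  qed
  show "\<exists>c::real>0. \<forall>\<phi>::'g \<Rightarrow> real. continuous_on UNIV \<phi> \<and> compact (closure {x. \<phi> x \<noteq> 0}) \<longrightarrow>
      (\<integral>x. \<phi> (H \<epsilon> x) \<partial>lam) = c * integral\<^sup>L lam \<phi>"
  proof (intro exI[of _ c] conjI allI impI)
    show "c > 0"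
      unfolding c_def using pos by simp
  qed (rule scaling)
qed

end

theorem proposition5p1:
  fixes E :: "real set" and emul :: "real \<Rightarrow> real \<Rightarrow> real" and eone :: real
    and einv :: "real \<Rightarrow> real"
    and H :: "real \<Rightarrow> 'g::{topological_ab_group_add, t2_space} \<Rightarrow> 'g"
  assumes G_lc: "locally_compact_space (euclidean :: 'g topology)"
    and G_nontriv: "\<exists>x::'g. x \<noteq> 0"
    and E: "R_group E emul eone einv"
    and act: "group_action E emul eone H"
    and cont: "continuous_action E H"
    and absorb: "absorptive E einv H"
    and additive: "\<forall>\<epsilon>\<in>E. \<forall>x y. H \<epsilon> (x + y) = H \<epsilon> x + H \<epsilon> y"
  shows "action_center E einv H = 0 \<and>
         metrizable_space (euclidean :: 'g topology) \<and>
         (sigma_compact (UNIV :: 'g set) \<and> \<not> compact (UNIV :: 'g set) \<and> (\<exists>x::'g. \<not> open {x})) \<and>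
         (\<forall>lam. haar_on (UNIV :: 'g set) (+) lam \<longrightarrow>
           nontrivial_measure E einv H lam \<and> homogeneous_measure E H lam)"
proof -
  interpret additive_absorptive_action E emul eone einv H
    by unfold_locales (fact E act cont absorb additive)+
  obtain K0 and \<psi> :: "'g \<Rightarrow> real" where "compact K0" "continuous_map euclidean (top_of_set {0..1}) \<psi>"
    and "\<psi> 0 = 0" "\<And>y. y \<notin> K0 \<Longrightarrow> \<psi> y = 1"
    using locally_compact_bump[OF G_lc] by blast
  then interpret absorptive_action_with_bump E emul eone einv H K0 \<psi>
    by unfold_locales
  obtain x :: 'g where "x \<noteq> 0"
    using G_nontriv by blast
  then show ?thesis
    using action_center_eq_zero metrizable_UNIV sigma_compact_UNIV not_compact_UNIV
      not_open_singleton_zero nontrivial_haar homogeneous_haar by blast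
qed

end
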